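(* Let $m\ge2$ and $2^m\le n<2^m+2^{m-1}-1$. Then every $f\in\mathbf{SB}_n$ satisfies $\mathcal{FAI}(f)\le\max\{2^m-2,\ 2n-3\cdot2^{m-1}+2\}$.
   Context: $\mathbf{SB}_n$ is the set of symmetric Boolean functions on $n$ variables; $\deg$ is the algebraic degree. $\mathcal{AI}(f)=\min\{\deg(g): g\neq0,\ gf=0 \text{ or } g(f+1)=0\}$ is the algebraic immunity, and the fast algebraic immunity is $\mathcal{FAI}(f)=\min\big(\{2\mathcal{AI}(f)\}\cup\{\deg(g)+\deg(gf): g\in\mathbf{B}_n,\ 1\le\deg(g)<\mathcal{AI}(f)\}\big)$, where $\mathbf{B}_n$ is the set of all Boolean functions on $n$ variables. *)

theory Defs
  imports Main
begin

text \<open>A Boolean function on n variables is represented by its truth table indexed by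
  the support sets T of input vectors x (T = {i. x_i = 1} \<subseteq> {0..<n}).
  Values outside subsets of {0..<n} are fixed to False so that B_n is a genuine set
  of 2^(2^n) functions.\<close>

type_synonym boolfun = "nat set \<Rightarrow> bool"

definition BF :: "nat \<Rightarrow> boolfun set" where
  "BF n = {f. \<forall>T. \<not> T \<subseteq> {..<n} \<longrightarrow> f T = False}"

definition SB :: "nat \<Rightarrow> boolfun set" where
  "SB n = {f \<in> BF n. \<forall>S T. S \<subseteq> {..<n} \<longrightarrow> T \<subseteq> {..<n} \<longrightarrow> card S = card T \<longrightarrow> f S = f T}"

definition bmul :: "boolfun \<Rightarrow> boolfun \<Rightarrow> boolfun" where
  "bmul g f = (\<lambda>T. g T \<and> f T)"

definition bcompl :: "nat \<Rightarrow> boolfun \<Rightarrow> boolfun" where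
  "bcompl n f = (\<lambda>T. T \<subseteq> {..<n} \<and> \<not> f T)"

text \<open>ANF coefficient of the monomial x_S (Moebius transform over GF(2)).\<close>
definition anf_coeff :: "boolfun \<Rightarrow> nat set \<Rightarrow> bool" where
  "anf_coeff f S = odd (card {T. T \<subseteq> S \<and> f T})"

text \<open>Algebraic degree (degree of the zero function taken as 0).\<close>
definition deg :: "nat \<Rightarrow> boolfun \<Rightarrow> nat" where
  "deg n f = Max ({card S | S. S \<subseteq> {..<n} \<and> anf_coeff f S} \<union> {0})"

definition zero_fun :: boolfun where
  "zero_fun = (\<lambda>T. False)"

definition AI :: "nat \<Rightarrow> boolfun \<Rightarrow> nat" where
  "AI n f = (LEAST d. \<exists>g \<in> BF n. g \<noteq> zero_fun \<and>
       (bmul g f = zero_fun \<or> bmul g (bcompl n f) = zero_fun) \<and> deg n g = d)"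

definition FAI :: "nat \<Rightarrow> boolfun \<Rightarrow> nat" where
  "FAI n f = (LEAST k. k \<in> {2 * AI n f} \<union>
       {deg n g + deg n (bmul g f) | g. g \<in> BF n \<and> 1 \<le> deg n g \<and> deg n g < AI n f})"

end

theory Submission
  imports Defs
begin

(* Write n = 2M + r with M = 2^(m-1), so that 0 <= r and r + 2 <= M.  For a symmetric
   f with value f(k) on inputs of weight k there are two cases:
   (A) f(j) = f(j + M) for some r < j < M.  Then g = "weight is j or j + M" has
       1 <= deg g, deg g <= M - 1 and deg (g f) <= M - 1, giving FAI f <= 2M - 2.
   (B) f(j) <> f(j + M) for all r < j < M.  Then g = sigma_(r+1), the elementary
       symmetric function of degree r + 1, satisfies deg (g f) <= M + r + 1,
       giving FAI f <= M + 2r + 2 = 2n - 3M + 2.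
   The degree of a symmetric function is read off from the parity of the numbers
   weight_count p s = sum of (s choose k) over the weights k <= s with p k, which
   is the number of inputs below an input of weight s on which the function is 1.
   These parities are controlled by a Lucas-type recurrence for adding a power of 2
   to s (weight_count_shift_even), which is proved first, from the parity of binomial
   coefficients. *)


subsection \<open>Parity of binomial coefficients\<close>

lemma sum_mod2_cong:
  fixes f g :: "'a \<Rightarrow> nat"
  assumes "\<And>i. i \<in> A \<Longrightarrow> f i mod 2 = g i mod 2"
  shows "sum f A mod 2 = sum g A mod 2"
proof -
  have "sum f A mod 2 = (\<Sum>i\<in>A. f i mod 2) mod 2" by (simp add: mod_sum_eq)
  also have "\<dots> = (\<Sum>i\<in>A. g i mod 2) mod 2" using assms by (simp cong: sum.cong)
  also have "\<dots> = sum g A mod 2" by (simp add: mod_sum_eq)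
  finally show ?thesis .
qed

lemma mod2_eq_iff: "((x::nat) mod 2 = y mod 2) \<longleftrightarrow> (even x \<longleftrightarrow> even y)"
  by presburger

lemma choose_double:
  "((2*c) choose (2*b)) mod 2 = (c choose b) mod 2 \<and> even ((2*c) choose (2*b+1))"
proof (induction c arbitrary: b)
  case 0
  then show ?case by (cases b) auto
next
  case (Suc c)
  have two_Suc: "2 * Suc c = Suc (Suc (2*c))" by simp
  have pascal2: "Suc (Suc a) choose Suc (Suc k) = (a choose Suc (Suc k)) + 2 * (a choose Suc k) + (a choose k)"
    for a k :: nat by simp
  show ?case
  proof (cases b)
    case 0
    then show ?thesis by (simp add: two_Suc)
  next
    case (Suc b')
    have idx: "2*b = Suc (Suc (2*b'))" "2*b+1 = Suc (Suc (2*b'+1))" using Suc by auto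
    have even_idx: "(2 * Suc c choose 2*b)
        = (2*c choose (2*(b'+1))) + 2 * (2*c choose (2*b'+1)) + (2*c choose (2*b'))"
      unfolding two_Suc idx pascal2 by (simp add: Suc)
    have odd_idx: "(2 * Suc c choose (2*b+1))
        = (2*c choose (2*(b'+1)+1)) + 2 * (2*c choose (2*(b'+1))) + (2*c choose (2*b'+1))"
      unfolding two_Suc idx pascal2 by (simp add: Suc)
    have "(2 * Suc c choose 2*b) mod 2 = ((2*c choose (2*(b'+1))) + (2*c choose (2*b'))) mod 2"
      unfolding even_idx by presburger
    also have "\<dots> = ((c choose (b'+1)) + (c choose b')) mod 2"
      using Suc.IH by (intro mod_add_cong) blast+
    also have "\<dots> = (Suc c choose b) mod 2" using Suc by (simp add: add.commute)
    moreover have "even (2*c choose (2*(b'+1)+1))" "even (2*c choose (2*b'+1))"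
      using Suc.IH by blast+
    ultimately show ?thesis using odd_idx by simp
  qed
qed

lemma choose_pow2_even:
  assumes "0 < i" "i < 2^e"
  shows "even ((2^e::nat) choose i)"
  using assms
proof (induction e arbitrary: i)
  case 0
  then show ?case by simp
next
  case (Suc e)
  have pow: "(2::nat)^Suc e = 2*2^e" by simp
  show ?case
  proof (cases "even i")
    case True
    then obtain d where d: "i = 2*d" by blast
    have "0 < d" "d < 2^e" using Suc.prems d by auto
    then have "even ((2^e::nat) choose d)" using Suc.IH by blast
    moreover have "((2*2^e) choose (2*d)) mod 2 = ((2^e::nat) choose d) mod 2"
      using choose_double by blast
    ultimately have "even ((2*2^e) choose (2*d))" by (simp only: even_iff_mod_2_eq_zero)
    then show ?thesis unfolding pow d .
  next
    case False
    then obtain d where "i = 2*d+1" using oddE by blast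
    then show ?thesis unfolding pow using choose_double by blast
  qed
qed

text \<open>Vandermonde's identity with 2^e, reduced mod 2: only the terms
  k = 0 and k = 2^e survive.\<close>
lemma choose_add_pow2_mod2:
  "((a + 2^e) choose b) mod 2 = ((a choose b) + (if 2^e \<le> b then a choose (b - 2^e) else 0)) mod 2"
proof -
  have "((a + 2^e) choose b) = (\<Sum>k\<le>b. ((2^e::nat) choose k) * (a choose (b - k)))"
    using vandermonde[of "2^e" a b] by (simp add: add.commute)
  also have "\<dots> mod 2 = (\<Sum>k\<le>b. (if k = 0 then a choose b else 0)
                                   + (if k = 2^e then a choose (b - k) else 0)) mod 2"
  proof (rule sum_mod2_cong)
    fix k
    have "k = 0 \<or> k = 2^e \<or> even ((2^e::nat) choose k)"
    proof (cases "0 < k \<and> k < 2^e")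
      case False
      then have "k = 0 \<or> k = 2^e \<or> 2^e < k" by auto
      then show ?thesis by (auto simp: binomial_eq_0)
    qed (use choose_pow2_even in blast)
    then show "((2^e::nat) choose k) * (a choose (b - k)) mod 2
        = ((if k = 0 then a choose b else 0) + (if k = 2^e then a choose (b - k) else 0)) mod 2"
      by auto
  qed
  also have "(\<Sum>k\<le>b. (if k = 0 then a choose b else 0) + (if k = 2^e then a choose (b - k) else 0))
      = (a choose b) + (if 2^e \<le> b then a choose (b - 2^e) else 0)"
    by (simp add: sum.distrib sum.delta)
  finally show ?thesis .
qed

lemma odd_choose_add_pow2:
  assumes "t < 2^e"
  shows "odd ((k + 2^e) choose t) \<longleftrightarrow> odd (k choose t)"
  using choose_add_pow2_mod2[of k e t] assms by (simp add: mod2_eq_iff)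


subsection \<open>Counting subsets by size\<close>

definition weight_count :: "(nat \<Rightarrow> bool) \<Rightarrow> nat \<Rightarrow> nat" where
  "weight_count p s = (\<Sum>k\<le>s. if p k then s choose k else 0)"

lemma weight_count_card:
  assumes "finite S"
  shows "card {T. T \<subseteq> S \<and> p (card T)} = weight_count p (card S)"
proof -
  let ?K = "{k\<in>{..card S}. p k}"
  have split: "{T. T \<subseteq> S \<and> p (card T)} = (\<Union>k\<in>?K. {T. T \<subseteq> S \<and> card T = k})"
    using assms by (auto intro: card_mono)
  have "card {T. T \<subseteq> S \<and> p (card T)} = (\<Sum>k\<in>?K. card {T. T \<subseteq> S \<and> card T = k})"
    unfolding split using assms by (intro card_UN_disjoint) auto
  also have "\<dots> = (\<Sum>k\<in>?K. card S choose k)"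
    using n_subsets[OF assms] by simp
  also have "\<dots> = weight_count p (card S)"
    unfolding weight_count_def by (rule sum.inter_filter) simp
  finally show ?thesis .
qed

lemma weight_count_cong: "(\<And>k. k \<le> s \<Longrightarrow> p k = q k) \<Longrightarrow> weight_count p s = weight_count q s"
  unfolding weight_count_def by (rule sum.cong) auto

lemma weight_count_zero: "(\<And>k. k \<le> s \<Longrightarrow> \<not> p k) \<Longrightarrow> weight_count p s = 0"
  unfolding weight_count_def by (rule sum.neutral) auto

lemma weight_count_least:
  assumes "\<And>k. k < s \<Longrightarrow> \<not> p k" "p s"
  shows "weight_count p s = 1"
proof -
  have "weight_count p s = (\<Sum>k<s. if p k then s choose k else 0) + 1"
    unfolding weight_count_def lessThan_Suc_atMost[symmetric] using assms(2) by simp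
  also have "(\<Sum>k<s. if p k then s choose k else 0) = 0"
    using assms(1) by (intro sum.neutral) auto
  finally show ?thesis by simp
qed

lemma weight_count_shift_even:
  assumes "s < 2^e"
  shows "even (weight_count p (2^e + s)) \<longleftrightarrow> even (weight_count (\<lambda>k. p k \<noteq> p (k + 2^e)) s)"
proof -
  let ?K = "(2::nat)^e"
  let ?low = "\<lambda>k. if p k then s choose k else 0"
  let ?high = "\<lambda>k. if p k \<and> ?K \<le> k then s choose (k - ?K) else 0"
  have "weight_count p (?K + s) mod 2 = (\<Sum>k\<le>?K + s. ?low k + ?high k) mod 2"
    unfolding weight_count_def
  proof (rule sum_mod2_cong)
    fix k
    have "(?K + s choose k) mod 2 = ((s choose k) + (if ?K \<le> k then s choose (k - ?K) else 0)) mod 2"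
      using choose_add_pow2_mod2[of s e k] by (simp add: add.commute)
    then show "(if p k then ?K + s choose k else 0) mod 2 = (?low k + ?high k) mod 2"
      by auto
  qed
  also have "(\<Sum>k\<le>?K + s. ?low k + ?high k) = (\<Sum>k\<le>?K + s. ?low k) + (\<Sum>k\<le>?K + s. ?high k)"
    by (simp add: sum.distrib)
  also have "(\<Sum>k\<le>?K + s. ?low k) = weight_count p s"
    unfolding weight_count_def by (rule sum.mono_neutral_right) auto
  also have "(\<Sum>k\<le>?K + s. ?high k) = (\<Sum>k\<in>{0 + ?K..s + ?K}. if p k then s choose (k - ?K) else 0)"
    by (rule sum.mono_neutral_cong_right) auto
  also have "\<dots> = weight_count (\<lambda>k. p (k + ?K)) s"
    unfolding weight_count_def atLeast0AtMost[symmetric] by (subst sum.shift_bounds_cl_nat_ivl) (simp only: diff_add_inverse2)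
  also have "(weight_count p s + weight_count (\<lambda>k. p (k + ?K)) s) mod 2
      = weight_count (\<lambda>k. p k \<noteq> p (k + ?K)) s mod 2"
    unfolding weight_count_def sum.distrib[symmetric] by (rule sum_mod2_cong) auto
  finally show ?thesis by (simp add: mod2_eq_iff)
qed

lemma sum_choose_choose:
  assumes "t \<le> s"
  shows "(\<Sum>k\<le>s. (s choose k) * (k choose t)) = (s choose t) * 2 ^ (s - t)"
proof -
  have "(\<Sum>k\<le>s. (s choose k) * (k choose t)) = (\<Sum>k\<in>{t..s}. (s choose t) * ((s - t) choose (k - t)))"
    by (rule sum.mono_neutral_cong_right) (auto simp: choose_mult)
  also have "\<dots> = (s choose t) * (\<Sum>k\<in>{0 + t..(s - t) + t}. ((s - t) choose (k - t)))"
    using assms by (simp add: sum_distrib_left)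
  also have "(\<Sum>k\<in>{0 + t..(s - t) + t}. ((s - t) choose (k - t))) = 2 ^ (s - t)"
    unfolding sum.shift_bounds_cl_nat_ivl atLeast0AtMost by (simp add: choose_row_sum)
  finally show ?thesis .
qed

text \<open>The elementary symmetric function of degree t (value 1 iff the weight
  k has k choose t odd) has no monomials of degree above t.\<close>
lemma weight_count_binomial_even:
  assumes "t < s"
  shows "even (weight_count (\<lambda>k. odd (k choose t)) s)"
proof -
  have "weight_count (\<lambda>k. odd (k choose t)) s mod 2 = (\<Sum>k\<le>s. (s choose k) * (k choose t)) mod 2"
    unfolding weight_count_def by (rule sum_mod2_cong) (auto simp: mod2_eq_iff)
  also have "\<dots> = ((s choose t) * 2 ^ (s - t)) mod 2"
    using assms by (simp add: sum_choose_choose)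
  finally have "even (weight_count (\<lambda>k. odd (k choose t)) s) \<longleftrightarrow> even ((s choose t) * 2 ^ (s - t))"
    by (simp only: mod2_eq_iff)
  then show ?thesis using assms by simp
qed


subsection \<open>Degrees of symmetric Boolean functions\<close>

definition symfun :: "nat \<Rightarrow> (nat \<Rightarrow> bool) \<Rightarrow> boolfun" where
  "symfun n p = (\<lambda>T. T \<subseteq> {..<n} \<and> p (card T))"

lemma symfun_BF: "symfun n p \<in> BF n"
  unfolding symfun_def BF_def by auto

lemma SB_value:
  assumes "f \<in> SB n" "T \<subseteq> {..<n}"
  shows "f T = f {..<card T}"
proof -
  have "card T \<le> n" using card_mono[of "{..<n}" T] assms by auto
  then have "{..<card T} \<subseteq> {..<n}" by auto
  moreover have "\<forall>S T. S \<subseteq> {..<n} \<longrightarrow> T \<subseteq> {..<n} \<longrightarrow> card S = card T \<longrightarrow> f S = f T"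
    using assms(1) unfolding SB_def by blast
  ultimately show ?thesis using assms(2) card_lessThan by metis
qed

lemma bmul_symfun:
  assumes "f \<in> SB n"
  shows "bmul (symfun n p) f = symfun n (\<lambda>k. p k \<and> f {..<k})"
proof
  fix T
  show "bmul (symfun n p) f T = symfun n (\<lambda>k. p k \<and> f {..<k}) T"
    using SB_value[OF assms, of T] unfolding bmul_def symfun_def by blast
qed

lemma anf_coeff_symfun:
  assumes "S \<subseteq> {..<n}"
  shows "anf_coeff (symfun n p) S \<longleftrightarrow> odd (weight_count p (card S))"
proof -
  have "{T. T \<subseteq> S \<and> symfun n p T} = {T. T \<subseteq> S \<and> p (card T)}"
    using assms unfolding symfun_def by auto
  moreover have "finite S" using assms finite_subset by blast
  ultimately show ?thesis unfolding anf_coeff_def by (simp add: weight_count_card)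
qed

lemma finite_deg_set: "finite {card S |S. S \<subseteq> {..<n} \<and> anf_coeff h S}"
proof (rule finite_subset[of _ "{..n}"])
  show "{card S |S. S \<subseteq> {..<n} \<and> anf_coeff h S} \<subseteq> {..n}"
    using card_mono[of "{..<n}"] by fastforce
qed simp

lemma deg_le:
  assumes "\<And>S. S \<subseteq> {..<n} \<Longrightarrow> anf_coeff h S \<Longrightarrow> card S \<le> D"
  shows "deg n h \<le> D"
  unfolding deg_def using finite_deg_set assms by (subst Max_le_iff) auto

lemma deg_ge:
  assumes "S \<subseteq> {..<n}" "anf_coeff h S"
  shows "card S \<le> deg n h"
  unfolding deg_def using finite_deg_set assms by (intro Max_ge) auto

lemma deg_symfun_le:
  assumes "\<And>s. D < s \<Longrightarrow> s \<le> n \<Longrightarrow> even (weight_count p s)"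
  shows "deg n (symfun n p) \<le> D"
proof (rule deg_le)
  fix S assume S: "S \<subseteq> {..<n}" "anf_coeff (symfun n p) S"
  have "card S \<le> n" using S(1) card_mono[of "{..<n}"] by fastforce
  then show "card S \<le> D" using S assms[of "card S"] anf_coeff_symfun[OF S(1)] by (meson not_le)
qed

lemma deg_symfun_ge:
  assumes "s \<le> n" "odd (weight_count p s)"
  shows "s \<le> deg n (symfun n p)"
proof -
  have "{..<s} \<subseteq> {..<n}" using assms(1) by auto
  then show ?thesis using deg_ge[of "{..<s}" n] anf_coeff_symfun assms(2) by fastforce
qed


text \<open>Any g of positive degree with deg g \<le> a and deg (g f) \<le> b bounds FAI f
  by max (a + b) (2a): either deg g < AI f and g is admissible in the definition
  of FAI, or AI f \<le> deg g and the term 2 AI f is at most 2a.\<close>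
lemma FAI_le:
  assumes "g \<in> BF n" "1 \<le> deg n g" "deg n g \<le> a" "deg n (bmul g f) \<le> b" "a + b \<le> B" "2*a \<le> B"
  shows "FAI n f \<le> B"
proof (cases "deg n g < AI n f")
  case True
  then have "deg n g + deg n (bmul g f)
      \<in> {deg n g + deg n (bmul g f) |g. g \<in> BF n \<and> 1 \<le> deg n g \<and> deg n g < AI n f}"
    using assms by blast
  then have "FAI n f \<le> deg n g + deg n (bmul g f)"
    unfolding FAI_def by (intro Least_le UnI2)
  then show ?thesis using assms by linarith
next
  case False
  have "FAI n f \<le> 2 * AI n f"
    unfolding FAI_def by (intro Least_le UnI1) simp
  then show ?thesis using assms False by linarith
qed


lemma FAI_le_equal_pair:
  assumes f: "f \<in> SB n"
    and n: "n = 2 * 2^e + r"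
    and j: "r < j" "j < 2^e"
    and equal: "f {..<j} = f {..<j + 2^e}"
  shows "FAI n f \<le> 2 * 2^e - 2"
proof -
  define K where "K = (2::nat)^e"
  define p where "p k = (k = j \<or> k = j + K)" for k
  define q where "q k = (p k \<and> f {..<k})" for k
  have j': "r < j" "j < K" using j unfolding K_def by auto
  have K2: "(2::nat)^Suc e = 2*K" unfolding K_def by simp
  have p_even: "even (weight_count p s)" if s: "K \<le> s" "s \<le> n" for s
  proof (cases "s < 2*K")
    case True
    then have "s = K + (s - K)" "s - K < K" using s by auto
    moreover have "weight_count (\<lambda>k. p k \<noteq> p (k + K)) (s - K) = 0"
      by (rule weight_count_zero) (use calculation j' in \<open>auto simp: p_def\<close>)
    ultimately show ?thesis using weight_count_shift_even[of "s - K" e p] unfolding K_def by simp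
  next
    case False
    then have "s = 2*K + (s - 2*K)" "s - 2*K \<le> r" "s - 2*K < 2*K" using s n j' unfolding K_def by auto
    moreover have "weight_count (\<lambda>k. p k \<noteq> p (k + 2*K)) (s - 2*K) = 0"
      by (rule weight_count_zero) (use calculation j' in \<open>auto simp: p_def\<close>)
    ultimately show ?thesis using weight_count_shift_even[of "s - 2*K" "Suc e" p] K2 by simp
  qed
  have q_even: "even (weight_count q s)" if "K \<le> s" "s \<le> n" for s
  proof (cases "f {..<j}")
    case True
    then have "weight_count q s = weight_count p s"
      by (intro weight_count_cong) (use equal in \<open>auto simp: q_def p_def K_def\<close>)
    then show ?thesis using p_even that by simp
  next
    case False
    then have "weight_count q s = 0"
      by (intro weight_count_zero) (use equal in \<open>auto simp: q_def p_def K_def\<close>)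
    then show ?thesis by simp
  qed
  have "weight_count p j = 1" by (rule weight_count_least) (auto simp: p_def)
  then have "j \<le> deg n (symfun n p)" using j n by (intro deg_symfun_ge) auto
  then have deg_g: "1 \<le> deg n (symfun n p)" using j' by simp
  have "deg n (symfun n p) \<le> K - 1" using p_even by (intro deg_symfun_le) auto
  moreover have "deg n (bmul (symfun n p) f) \<le> K - 1"
    unfolding bmul_symfun[OF f] q_def[symmetric] using q_even by (intro deg_symfun_le) auto
  ultimately show ?thesis
    using FAI_le[OF symfun_BF deg_g, of "K - 1" f "K - 1"] j' unfolding K_def by simp
qed

lemma FAI_le_all_differ:
  assumes f: "f \<in> SB n"
    and n: "n = 2 * 2^e + r"
    and r: "r + 2 \<le> 2^e"
    and differ: "\<And>j. r < j \<Longrightarrow> j < 2^e \<Longrightarrow> f {..<j} \<noteq> f {..<j + 2^e}"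
  shows "FAI n f \<le> 2^e + 2 * r + 2"
proof -
  define K where "K = (2::nat)^e"
  define p where "p k = odd (k choose (r + 1))" for k
  define q where "q k = (p k \<and> f {..<k})" for k
  have K2: "(2::nat)^Suc e = 2*K" unfolding K_def by simp
  have p_period: "p (k + K) = p k" "p (k + 2*K) = p k" for k
    using odd_choose_add_pow2[of "r + 1" e k] odd_choose_add_pow2[of "r + 1" "Suc e" k] r K2
    unfolding p_def K_def by auto
  have p_small: "\<not> p k" if "k \<le> r" for k
    using that unfolding p_def by (simp add: binomial_eq_0)
  have q_even: "even (weight_count q s)" if s: "K + r + 2 \<le> s" "s \<le> n" for s
  proof (cases "s < 2*K")
    case True
    then have s': "s = K + (s - K)" "s - K < K" "r + 1 < s - K" using s by auto
    have "weight_count (\<lambda>k. q k \<noteq> q (k + K)) (s - K) = weight_count p (s - K)"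
    proof (rule weight_count_cong)
      fix k assume "k \<le> s - K"
      then have "p k \<Longrightarrow> f {..<k} \<noteq> f {..<k + K}"
        using differ[of k] p_small s' unfolding K_def by (meson le_less_trans not_le)
      then show "(q k \<noteq> q (k + K)) = p k" using p_period(1)[of k] unfolding q_def by auto
    qed
    moreover have "even (weight_count p (s - K))"
      unfolding p_def by (rule weight_count_binomial_even) (use s' in simp)
    ultimately show ?thesis using weight_count_shift_even[of "s - K" e q] s' unfolding K_def by simp
  next
    case False
    then have s': "s = 2*K + (s - 2*K)" "s - 2*K \<le> r" "s - 2*K < 2*K" using s n r unfolding K_def by auto
    have "weight_count (\<lambda>k. q k \<noteq> q (k + 2*K)) (s - 2*K) = 0"
      by (rule weight_count_zero) (use s' p_small p_period in \<open>auto simp: q_def\<close>)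
    then show ?thesis using weight_count_shift_even[of "s - 2*K" "Suc e" q] s' K2 by simp
  qed
  have "weight_count p (r + 1) = 1" by (rule weight_count_least) (auto simp: p_def binomial_eq_0)
  then have "r + 1 \<le> deg n (symfun n p)" using n r by (intro deg_symfun_ge) auto
  then have deg_g: "1 \<le> deg n (symfun n p)" by simp
  have "deg n (symfun n p) \<le> r + 1"
    unfolding p_def by (intro deg_symfun_le weight_count_binomial_even) simp
  moreover have "deg n (bmul (symfun n p) f) \<le> K + r + 1"
    unfolding bmul_symfun[OF f] q_def[symmetric] using q_even by (intro deg_symfun_le) auto
  ultimately show ?thesis
    using FAI_le[OF symfun_BF deg_g, of "r + 1" f "K + r + 1"] unfolding K_def by simp
qed


theorem corollary7:
  fixes m n :: nat and f :: boolfun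
  assumes "m \<ge> 2"
    and "2 ^ m \<le> n"
    and "n < 2 ^ m + 2 ^ (m - 1) - 1"
    and "f \<in> SB n"
  shows "FAI n f \<le> max (2 ^ m - 2) (2 * n - 3 * 2 ^ (m - 1) + 2)"
proof -
  define e where "e = m - 1"
  define r where "r = n - 2 * 2^e"
  have pow_m: "(2::nat)^m = 2 * 2^e" using assms(1) unfolding e_def by (cases m) auto
  have n: "n = 2 * 2^e + r" using assms(2) pow_m unfolding r_def by simp
  have r: "r + 2 \<le> 2^e" using assms(3) pow_m n unfolding e_def by simp
  show ?thesis
  proof (cases "\<exists>j. r < j \<and> j < 2^e \<and> f {..<j} = f {..<j + 2^e}")
    case True
    then obtain j where "r < j" "j < 2^e" "f {..<j} = f {..<j + 2^e}" by blast
    then have "FAI n f \<le> 2 * 2^e - 2" using FAI_le_equal_pair[OF assms(4) n] by blast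
    then show ?thesis using pow_m by simp
  next
    case False
    then have "FAI n f \<le> 2^e + 2 * r + 2" using FAI_le_all_differ[OF assms(4) n r] by blast
    then show ?thesis using n unfolding e_def by simp
  qed
qed

end
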